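(* Let $A\in\mathcal{S}$ with elements $a_0<a_1<\dots<a_{n-1}$ and greatest element $a_{\max}=a_{n-1}$. Then $A$ is decomposable if and only if there is an $i<n-1$ such that $o(a_i,a_{\max})=0$.
   Context: $\mathrm{Homeo}_+(I)$ acts on $I=[0,1]$ on the right, composition left to right, $f^g=g^{-1}fg$. Support $\mathrm{supt}(f)=\{t:tf\ne t\}$; extended support = interior of its closure; orbitals = components of the support, endpoints = transition points; a bump has exactly one orbital, positive if $tf>t$ there, else negative; the bump of $g$ on an orbital $J$ agrees with $g$ on $J$ and is the identity elsewhere. A marking assigns to each bump $a$ with support $(u,v)$ a point $s_a\in(u,v)$; feet of $a$: $(u,s_a)$ and $[t_a,v)$ with $t_a=s_aa$ ($a$ positive) or $s_aa^{-1}$ ($a$ negative). A marked function has finitely many bumps, each marked. A finite set of marked functions is fast if no bump occurs in two of its elements and distinct bumps have disjoint feet. A standard function is a marked function whose extended support is an interval, with all positive bumps right of all negative bumps, and #positive $-$ #negative bumps $\in\{0,1\}$. For standard $f,g$: $f\ll g$ iff extended supports disjoint with $f$'s to the left; $f\sqsubset g$ iff closure of extended support of $f$ lies in extended support of $g$; $f<g$ iff $f\ll g$ or $f\sqsubset g$. $f^\circ$: if $f$ has $>2$ orbitals, $f$ restricted to the union of its non-extreme orbitals (identity elsewhere, markers inherited); if $f$ has 1 or 2 orbitals and the left foot of its positive bump is $(r,s)$, a positive bump with support $(r,s)$. $(f,g)$ is a standard pair if $\{f,g\}$ is fast and either $f\ll g$ or ($f\sqsubset g$ and $(g^\circ,f)$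 is a standard pair). $\mathcal{S}$ = finite sets of standard functions, pairwise $<$-comparable, each pair $f<g$ a standard pair. For $f<g$ the oscillation $o(f,g)$ is the number of orbitals of $g$ containing a transition point of $f$. For $A,B,C\in\mathcal S$, $A=B+C$ means $A=B\cup C$ and $b\ll c$ for all $b\in B$, $c\in C$; $A$ is decomposable if $A=B+C$ for some nonempty $B,C$, and indecomposable otherwise. *)

theory Defs
  imports "HOL-Analysis.Analysis"
begin

text \<open>An element of Homeo_+(I) is represented by a function real to real which is an
  increasing homeomorphism of [0,1] onto itself and the identity outside [0,1]
  (canonical extension). The right action t f is written f t.\<close>

definition homeo_plus :: "(real \<Rightarrow> real) \<Rightarrow> bool" where
  "homeo_plus f \<longleftrightarrow> (\<exists>g. homeomorphism {0..1} {0..1} f g) \<and> mono_on {0..1} f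
      \<and> (\<forall>t. t \<notin> {0..1} \<longrightarrow> f t = t)"

definition supt :: "(real \<Rightarrow> real) \<Rightarrow> real set" where
  "supt f = {t. f t \<noteq> t}"

definition ext_supp :: "(real \<Rightarrow> real) \<Rightarrow> real set" where
  "ext_supp f = interior (closure (supt f))"

definition orbitals :: "(real \<Rightarrow> real) \<Rightarrow> real set set" where
  "orbitals f = components (supt f)"

definition transition_points :: "(real \<Rightarrow> real) \<Rightarrow> real set" where
  "transition_points f = (\<Union>J\<in>orbitals f. {Inf J, Sup J})"

definition is_bump :: "(real \<Rightarrow> real) \<Rightarrow> bool" where
  "is_bump f \<longleftrightarrow> homeo_plus f \<and> card (orbitals f) = 1"

definition positive_bump :: "(real \<Rightarrow> real) \<Rightarrow> bool" where
  "positive_bump f \<longleftrightarrow> is_bump f \<and> (\<forall>t\<in>supt f. f t > t)"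

definition negative_bump :: "(real \<Rightarrow> real) \<Rightarrow> bool" where
  "negative_bump f \<longleftrightarrow> is_bump f \<and> (\<forall>t\<in>supt f. f t < t)"

definition bump_of :: "(real \<Rightarrow> real) \<Rightarrow> real set \<Rightarrow> (real \<Rightarrow> real)" where
  "bump_of f J = (\<lambda>t. if t \<in> J then f t else t)"

text \<open>A marked function is a pair (f, M) where M is the set of markers:
  exactly one marker in each orbital, and no other markers.\<close>
type_synonym mfun = "(real \<Rightarrow> real) \<times> real set"

definition marked :: "mfun \<Rightarrow> bool" where
  "marked F \<longleftrightarrow> homeo_plus (fst F) \<and> finite (orbitals (fst F))
     \<and> snd F \<subseteq> supt (fst F)
     \<and> (\<forall>J\<in>orbitals (fst F). \<exists>!s. s \<in> snd F \<inter> J)"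

definition marked_bumps :: "mfun \<Rightarrow> ((real \<Rightarrow> real) \<times> real) set" where
  "marked_bumps F = {(bump_of (fst F) J, s) | J s. J \<in> orbitals (fst F) \<and> s \<in> snd F \<inter> J}"

text \<open>Feet of a marked bump (b, s) with support (u, v): (u, s) and [t, v), where
  t = s b if b is positive and t = s b^{-1} (i.e. b t = s) if b is negative.\<close>
definition left_foot :: "(real \<Rightarrow> real) \<times> real \<Rightarrow> real set" where
  "left_foot a = {Inf (supt (fst a))<..<snd a}"

definition foot_point :: "(real \<Rightarrow> real) \<times> real \<Rightarrow> real" where
  "foot_point a = (if fst a (snd a) > snd a then fst a (snd a)
                   else (THE t. fst a t = snd a))"

definition right_foot :: "(real \<Rightarrow> real) \<times> real \<Rightarrow> real set" where
  "right_foot a = {foot_point a..<Sup (supt (fst a))}"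

definition feet :: "(real \<Rightarrow> real) \<times> real \<Rightarrow> real set" where
  "feet a = left_foot a \<union> right_foot a"

definition fast :: "mfun set \<Rightarrow> bool" where
  "fast X \<longleftrightarrow> finite X \<and> (\<forall>F\<in>X. marked F)
     \<and> (\<forall>F\<in>X. \<forall>G\<in>X. F \<noteq> G \<longrightarrow> marked_bumps F \<inter> marked_bumps G = {})
     \<and> (\<forall>a\<in>(\<Union>F\<in>X. marked_bumps F). \<forall>b\<in>(\<Union>F\<in>X. marked_bumps F).
           a \<noteq> b \<longrightarrow> feet a \<inter> feet b = {})"

definition pos_orbitals :: "(real \<Rightarrow> real) \<Rightarrow> real set set" where
  "pos_orbitals f = {J\<in>orbitals f. \<forall>t\<in>J. f t > t}"

definition neg_orbitals :: "(real \<Rightarrow> real) \<Rightarrow> real set set" where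
  "neg_orbitals f = {J\<in>orbitals f. \<forall>t\<in>J. f t < t}"

definition standard :: "mfun \<Rightarrow> bool" where
  "standard F \<longleftrightarrow> marked F
     \<and> (\<exists>a b. a < b \<and> ext_supp (fst F) = {a<..<b})
     \<and> (\<forall>P\<in>pos_orbitals (fst F). \<forall>N\<in>neg_orbitals (fst F). \<forall>x\<in>P. \<forall>y\<in>N. y < x)
     \<and> int (card (pos_orbitals (fst F))) - int (card (neg_orbitals (fst F))) \<in> {0, 1}"

definition ll :: "mfun \<Rightarrow> mfun \<Rightarrow> bool" (infix "\<lless>" 50) where
  "F \<lless> G \<longleftrightarrow> ext_supp (fst F) \<inter> ext_supp (fst G) = {}
     \<and> (\<forall>x\<in>ext_supp (fst F). \<forall>y\<in>ext_supp (fst G). x < y)"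

definition sqsub :: "mfun \<Rightarrow> mfun \<Rightarrow> bool" (infix "\<sqsubset>" 50) where
  "F \<sqsubset> G \<longleftrightarrow> closure (ext_supp (fst F)) \<subseteq> ext_supp (fst G)"

definition slt :: "mfun \<Rightarrow> mfun \<Rightarrow> bool" where
  "slt F G \<longleftrightarrow> F \<lless> G \<or> F \<sqsubset> G"

definition leftmost_orbital :: "(real \<Rightarrow> real) \<Rightarrow> real set" where
  "leftmost_orbital f = (THE J. J \<in> orbitals f \<and>
      (\<forall>K\<in>orbitals f. K \<noteq> J \<longrightarrow> (\<forall>x\<in>J. \<forall>y\<in>K. x < y)))"

definition rightmost_orbital :: "(real \<Rightarrow> real) \<Rightarrow> real set" where
  "rightmost_orbital f = (THE J. J \<in> orbitals f \<and>
      (\<forall>K\<in>orbitals f. K \<noteq> J \<longrightarrow> (\<forall>x\<in>J. \<forall>y\<in>K. y < x)))"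

definition marker_of :: "mfun \<Rightarrow> real set \<Rightarrow> real" where
  "marker_of F J = (THE s. s \<in> snd F \<inter> J)"

definition circ :: "mfun \<Rightarrow> mfun" where
  "circ F =
    (if card (orbitals (fst F)) > 2 then
       (let U = \<Union>(orbitals (fst F) - {leftmost_orbital (fst F), rightmost_orbital (fst F)})
        in ((\<lambda>t. if t \<in> U then fst F t else t), snd F \<inter> U))
     else
       (let P = (THE J. J \<in> pos_orbitals (fst F));
            r = Inf P; s = marker_of F P
        in (SOME B. marked B \<and> positive_bump (fst B) \<and> supt (fst B) = {r<..<s})))"

inductive std_pair :: "mfun \<Rightarrow> mfun \<Rightarrow> bool" where
  ll_pair: "fast {F, G} \<Longrightarrow> F \<lless> G \<Longrightarrow> std_pair F G"
| sq_pair: "fast {F, G} \<Longrightarrow> F \<sqsubset> G \<Longrightarrow> std_pair (circ G) F \<Longrightarrow> std_pair F G"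

definition class_S :: "mfun set set" where
  "class_S = {A. finite A \<and> (\<forall>F\<in>A. standard F)
      \<and> (\<forall>F\<in>A. \<forall>G\<in>A. F \<noteq> G \<longrightarrow> slt F G \<or> slt G F)
      \<and> (\<forall>F\<in>A. \<forall>G\<in>A. slt F G \<longrightarrow> std_pair F G)}"

definition oscillation :: "mfun \<Rightarrow> mfun \<Rightarrow> nat" where
  "oscillation F G = card {J\<in>orbitals (fst G). transition_points (fst F) \<inter> J \<noteq> {}}"

definition is_sum :: "mfun set \<Rightarrow> mfun set \<Rightarrow> mfun set \<Rightarrow> bool" where
  "is_sum A B C \<longleftrightarrow> A \<in> class_S \<and> B \<in> class_S \<and> C \<in> class_S \<and> A = B \<union> C
      \<and> (\<forall>b\<in>B. \<forall>c\<in>C. b \<lless> c)"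

definition decomposable :: "mfun set \<Rightarrow> bool" where
  "decomposable A \<longleftrightarrow> (\<exists>B C. B \<noteq> {} \<and> C \<noteq> {} \<and> is_sum A B C)"

end

theory Submission
  imports Defs
begin

text \<open>If \<open>A = B + C\<close> then \<open>a\<^sub>m\<^sub>a\<^sub>x\<close> lies in \<open>C\<close>, so some \<open>a\<^sub>i \<lless> a\<^sub>m\<^sub>a\<^sub>x\<close>, and disjoint
  extended supports leave no transition point of \<open>a\<^sub>i\<close> inside an orbital of \<open>a\<^sub>m\<^sub>a\<^sub>x\<close>.
  Conversely, suppose \<open>o(a\<^sub>i, a\<^sub>m\<^sub>a\<^sub>x) = 0\<close>. If \<open>a\<^sub>i \<sqsubset> a\<^sub>m\<^sub>a\<^sub>x\<close>, the left end \<open>c\<close> of the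
  extended support of \<open>a\<^sub>i\<close> is a transition point of \<open>a\<^sub>i\<close> lying in the extended support of
  \<open>a\<^sub>m\<^sub>a\<^sub>x\<close> but in none of its orbitals; hence \<open>c\<close> is also the left end of an orbital of
  \<open>a\<^sub>m\<^sub>a\<^sub>x\<close>, and the two left feet starting at \<open>c\<close> overlap, contradicting fastness.
  So \<open>a\<^sub>i \<lless> a\<^sub>m\<^sub>a\<^sub>x\<close>, and \<open>A\<close> splits into the elements \<open>\<lless> a\<^sub>m\<^sub>a\<^sub>x\<close> and the rest,
  all of which are \<open>\<sqsubset> a\<^sub>m\<^sub>a\<^sub>x\<close> or equal to it.\<close>

lemma homeo_plus_fixes_endpoints:
  assumes "homeo_plus f" shows "f 0 = 0" "f 1 = 1"
proof -
  obtain g where h: "homeomorphism {0..1} {0..1} f g" and m: "mono_on {0..1} f"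
    using assms unfolding homeo_plus_def by blast
  have im: "f ` {0..1} = {0..1}" using h unfolding homeomorphism_def by blast
  have "0 \<in> f ` {0..1}" "1 \<in> f ` {0..1}" using im by auto
  then obtain x y where x: "x \<in> {0..1::real}" "f x = 0" and y: "y \<in> {0..1::real}" "f y = 1"
    by (metis imageE)
  have "f 0 \<le> f x" "f y \<le> f 1" using mono_onD[OF m] x(1) y(1) by auto
  moreover have "f 0 \<in> {0..1}" "f 1 \<in> {0..1}" using im by auto
  ultimately show "f 0 = 0" "f 1 = 1" using x y by auto
qed

lemma homeo_plus_supt_subset:
  assumes "homeo_plus f" shows "supt f \<subseteq> {0<..<1}"
proof
  fix t assume "t \<in> supt f"
  then have "f t \<noteq> t" unfolding supt_def by simp
  moreover have "f t = t" if "t \<notin> {0..1}"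
    using assms that unfolding homeo_plus_def by blast
  ultimately have "t \<in> {0..1}" "t \<noteq> 0" "t \<noteq> 1"
    using homeo_plus_fixes_endpoints[OF assms] by auto
  then show "t \<in> {0<..<1}" by auto
qed

lemma open_supt:
  assumes "homeo_plus f" shows "open (supt f)"
proof -
  obtain g where "homeomorphism {0..1} {0..1} f g"
    using assms unfolding homeo_plus_def by blast
  then have "continuous_on {0..1} f" unfolding homeomorphism_def by blast
  then have "continuous_on {0<..<1} f" by (rule continuous_on_subset) auto
  then have "continuous_on {0<..<1} (\<lambda>t. f t - t)"
    by (intro continuous_on_diff continuous_on_id)
  moreover have "supt f = {0<..<1} \<inter> (\<lambda>t. f t - t) -` (-{0})"
    using homeo_plus_supt_subset[OF assms] unfolding supt_def by auto
  ultimately show ?thesis by (auto intro: continuous_open_preimage)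
qed

lemma Inf_orbital_less:
  assumes "homeo_plus f" "J \<in> orbitals f" "s \<in> J"
  shows "Inf J < s"
proof -
  have "open J" using open_supt[OF assms(1)] assms(2) unfolding orbitals_def by (rule open_components)
  moreover have J_pos: "\<forall>t\<in>J. 0 < t"
    using homeo_plus_supt_subset[OF assms(1)] in_components_subset[of J "supt f"] assms(2)
    unfolding orbitals_def by fastforce
  ultimately have "Inf J \<notin> J" by (rule Inf_notin_open)
  moreover have "Inf J \<le> s" using J_pos assms(3) by (meson bdd_below_def cInf_lower less_imp_le)
  ultimately show ?thesis using assms(3) by (auto simp: le_less)
qed

lemma interval_before_interval:
  fixes a b c d :: real
  assumes "a < b" "c < d" "\<forall>x\<in>{a<..<b}. \<forall>y\<in>{c<..<d}. x < y"
  shows "b \<le> c"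
proof (rule ccontr)
  assume "\<not> b \<le> c"
  then obtain x where x: "max a c < x" "x < b" using assms(1) dense[of "max a c" b] by auto
  obtain y where y: "c < y" "y < min x d" using assms(2) x dense[of c "min x d"] by auto
  have "x \<in> {a<..<b}" "y \<in> {c<..<d}" using x y by auto
  with assms(3) have "x < y" by blast
  with y show False by simp
qed

lemma supt_bump_of:
  assumes "J \<in> orbitals f" shows "supt (bump_of f J) = J"
  using in_components_subset[of J "supt f"] assms
  unfolding orbitals_def supt_def bump_of_def by auto

lemma fast_orbitals_Inf_neq:
  assumes fast: "fast {F, G}" and "F \<noteq> G"
    and J: "J \<in> orbitals (fst F)" and K: "K \<in> orbitals (fst G)"
  shows "Inf J \<noteq> Inf K"
proof
  assume same_Inf: "Inf J = Inf K"
  have "marked F" "marked G" using fast unfolding fast_def by simp_all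
  then obtain s r where s: "s \<in> snd F \<inter> J" and r: "r \<in> snd G \<inter> K"
    using J K unfolding marked_def by meson
  define p where "p = (bump_of (fst F) J, s)"
  define q where "q = (bump_of (fst G) K, r)"
  have p: "p \<in> marked_bumps F" using J s unfolding p_def marked_bumps_def by blast
  have q: "q \<in> marked_bumps G" using K r unfolding q_def marked_bumps_def by blast
  have "p \<noteq> q" using fast \<open>F \<noteq> G\<close> p q unfolding fast_def by blast
  then have disj: "feet p \<inter> feet q = {}" using fast p q unfolding fast_def by blast
  have "homeo_plus (fst F)" "homeo_plus (fst G)"
    using \<open>marked F\<close> \<open>marked G\<close> unfolding marked_def by simp_all
  then have "Inf J < s" "Inf K < r"
    using Inf_orbital_less J K s r by blast+
  moreover have "left_foot p = {Inf J<..<s}" "left_foot q = {Inf K<..<r}"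
    unfolding p_def q_def left_foot_def by (simp_all add: supt_bump_of J K)
  ultimately have "(Inf J + min s r) / 2 \<in> feet p \<inter> feet q"
    unfolding feet_def same_Inf by (auto simp: min_def)
  with disj show False by blast
qed

lemma connected_avoiding_point:
  fixes J :: "real set"
  assumes "connected J" "c \<notin> J"
  shows "J \<subseteq> {c<..} \<or> J \<subseteq> {..<c}"
proof (rule ccontr)
  assume "\<not> ?thesis"
  then obtain y z where yz: "y \<in> J" "z \<in> J" "\<not> c < y" "\<not> z < c" by blast
  then have "c \<in> {y..z}" by simp
  then show False using connected_contains_Icc[OF assms(1) yz(1,2)] assms(2) by blast
qed

lemma orbital_with_Inf:
  assumes fin: "finite (orbitals f)" and c: "c \<notin> supt f" and "c < e"
    and near_c: "{c<..<e} \<subseteq> closure (supt f)"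
  shows "\<exists>J\<in>orbitals f. Inf J = c"
proof (rule ccontr)
  assume no_J: "\<not> ?thesis"
  define P where "P = {J\<in>orbitals f. J \<subseteq> {c<..}}"
  define m where "m = Min (insert e (Inf ` P))"
  have "finite P" using fin unfolding P_def by simp
  have Inf_P: "c < Inf J" if "J \<in> P" for J
  proof -
    have "J \<noteq> {}" using that in_components_nonempty unfolding P_def orbitals_def by blast
    then have "c \<le> Inf J" using that unfolding P_def by (intro cInf_greatest) auto
    with no_J that show ?thesis unfolding P_def by force
  qed
  have "c < m" unfolding m_def using \<open>finite P\<close> Inf_P \<open>c < e\<close> by simp
  have "m \<le> e" "\<forall>J\<in>P. m \<le> Inf J" unfolding m_def using \<open>finite P\<close> by simp_all
  \<comment> \<open>\<open>m\<close> lies below every orbital to the right of \<open>c\<close>, so no orbital has \<open>(c + m) / 2\<close> in its closure.\<close>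
  define x where "x = (c + m) / 2"
  have "x \<in> closure (\<Union>(orbitals f))"
    using near_c \<open>c < m\<close> \<open>m \<le> e\<close> unfolding orbitals_def x_def by auto
  then obtain J where J: "J \<in> orbitals f" "x \<in> closure J"
    using closure_of_Union[OF fin, of euclidean] by auto
  have "connected J" "c \<notin> J"
    using J(1) c in_components_connected in_components_subset unfolding orbitals_def by blast+
  then have "J \<subseteq> {c<..} \<or> J \<subseteq> {..<c}" by (rule connected_avoiding_point)
  then show False
  proof
    assume "J \<subseteq> {c<..}"
    then have "J \<in> P" using J(1) unfolding P_def by simp
    have "bdd_below J" using \<open>J \<subseteq> {c<..}\<close> by (rule bdd_below_mono[OF bdd_below_Ioi])
    then have "closure J \<subseteq> {Inf J..}" by (intro closure_minimal) (auto intro: cInf_lower)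
    then show False using J(2) \<open>J \<in> P\<close> \<open>\<forall>J\<in>P. m \<le> Inf J\<close> \<open>c < m\<close> unfolding x_def by fastforce
  next
    assume "J \<subseteq> {..<c}"
    then have "closure J \<subseteq> {..c}" by (intro closure_minimal) auto
    then show False using J(2) \<open>c < m\<close> unfolding x_def by auto
  qed
qed

lemma standard_ext_supp:
  assumes "standard F" obtains c d where "c < d" "ext_supp (fst F) = {c<..<d}"
  using assms unfolding standard_def by blast

lemma standard_homeo_plus: "standard F \<Longrightarrow> homeo_plus (fst F)"
  unfolding standard_def marked_def by blast

lemma standard_finite_orbitals: "standard F \<Longrightarrow> finite (orbitals (fst F))"
  unfolding standard_def marked_def by blast

lemma supt_subset_ext_supp:
  assumes "homeo_plus f" shows "supt f \<subseteq> ext_supp f"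
  unfolding ext_supp_def by (intro interior_maximal closure_subset open_supt assms)

lemma orbital_subset_ext_supp:
  assumes "homeo_plus f" "J \<in> orbitals f" shows "J \<subseteq> ext_supp f"
  using supt_subset_ext_supp[OF assms(1)] in_components_subset[of J "supt f"] assms(2)
  unfolding orbitals_def by blast

lemma transition_points_subset_closure:
  assumes "standard F"
  shows "transition_points (fst F) \<subseteq> closure (ext_supp (fst F))"
proof
  fix t assume "t \<in> transition_points (fst F)"
  then obtain J where J: "J \<in> orbitals (fst F)" and t: "t = Inf J \<or> t = Sup J"
    unfolding transition_points_def by blast
  obtain c d where ext: "ext_supp (fst F) = {c<..<d}" using standard_ext_supp[OF assms] by blast
  have J_sub: "J \<subseteq> ext_supp (fst F)"
    using orbital_subset_ext_supp[OF standard_homeo_plus[OF assms] J] .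
  then have "bdd_below J" "bdd_above J"
    unfolding ext by (auto intro: bdd_below_mono bdd_above_mono)
  moreover have "J \<noteq> {}" using J in_components_nonempty unfolding orbitals_def by blast
  ultimately have "t \<in> closure J" using t closure_contains_Inf closure_contains_Sup by metis
  then show "t \<in> closure (ext_supp (fst F))" using closure_mono[OF J_sub] by blast
qed

lemma oscillation_eq_0_iff:
  assumes "finite (orbitals (fst G))"
  shows "oscillation F G = 0 \<longleftrightarrow> (\<forall>J\<in>orbitals (fst G). transition_points (fst F) \<inter> J = {})"
  using assms unfolding oscillation_def by auto

lemma standard_ext_supp_nonempty: "standard F \<Longrightarrow> ext_supp (fst F) \<noteq> {}"
  by (elim standard_ext_supp) simp

lemma ll_irrefl: "standard F \<Longrightarrow> \<not> F \<lless> F"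
  using standard_ext_supp_nonempty unfolding ll_def by blast

lemma sqsub_irrefl:
  assumes "standard F" shows "\<not> F \<sqsubset> F"
proof
  assume "F \<sqsubset> F"
  obtain c d where "c < d" "ext_supp (fst F) = {c<..<d}" using standard_ext_supp[OF assms] by blast
  then have "c \<in> closure (ext_supp (fst F))" "c \<notin> ext_supp (fst F)" by auto
  with \<open>F \<sqsubset> F\<close> show False unfolding sqsub_def by blast
qed

lemma ll_sqsub_trans: "F \<lless> G \<Longrightarrow> H \<sqsubset> G \<Longrightarrow> F \<lless> H"
  unfolding ll_def sqsub_def using closure_subset by blast

lemma ll_imp_not_slt:
  assumes "standard F" "standard G" "F \<lless> G" shows "\<not> slt G F"
proof
  obtain x y where x: "x \<in> ext_supp (fst F)" and y: "y \<in> ext_supp (fst G)"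
    using standard_ext_supp_nonempty assms(1,2) by blast
  assume "slt G F"
  then consider "G \<lless> F" | "G \<sqsubset> F" unfolding slt_def by blast
  then show False
  proof cases
    case 1
    then show False using assms(3) x y unfolding ll_def by (meson less_asym)
  next
    case 2
    then have "y \<in> ext_supp (fst F)" using y closure_subset unfolding sqsub_def by blast
    then show False using assms(3) y unfolding ll_def by blast
  qed
qed

lemma ll_imp_oscillation_eq_0:
  assumes F: "standard F" and G: "standard G" and "F \<lless> G"
  shows "oscillation F G = 0"
proof -
  obtain c d where cd: "c < d" "ext_supp (fst F) = {c<..<d}" using standard_ext_supp[OF F] by blast
  obtain e g where eg: "e < g" "ext_supp (fst G) = {e<..<g}" using standard_ext_supp[OF G] by blast
  have "d \<le> e" using \<open>F \<lless> G\<close> cd eg unfolding ll_def by (intro interval_before_interval) auto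
  have "transition_points (fst F) \<inter> J = {}" if J: "J \<in> orbitals (fst G)" for J
  proof -
    have "transition_points (fst F) \<subseteq> {c..d}"
      using transition_points_subset_closure[OF F] cd by simp
    moreover have "J \<subseteq> {e<..<g}"
      using orbital_subset_ext_supp[OF standard_homeo_plus[OF G] J] eg by simp
    ultimately show ?thesis using \<open>d \<le> e\<close> by fastforce
  qed
  then show ?thesis using oscillation_eq_0_iff[OF standard_finite_orbitals[OF G]] by blast
qed

lemma sqsub_imp_oscillation_neq_0:
  assumes F: "standard F" and G: "standard G" and fast: "fast {F, G}" and "F \<sqsubset> G"
  shows "oscillation F G \<noteq> 0"
proof
  assume osc: "oscillation F G = 0"
  obtain c d where cd: "c < d" "ext_supp (fst F) = {c<..<d}" using standard_ext_supp[OF F] by blast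
  obtain a b where ab: "a < b" "ext_supp (fst G) = {a<..<b}" using standard_ext_supp[OF G] by blast
  have "c \<in> closure (ext_supp (fst F))" using cd by simp
  then have "c \<in> {a<..<b}" using \<open>F \<sqsubset> G\<close> ab unfolding sqsub_def by blast
  have "c \<notin> supt (fst F)" using supt_subset_ext_supp[OF standard_homeo_plus[OF F]] cd by auto
  moreover have "{c<..<d} \<subseteq> closure (supt (fst F))"
    using cd interior_subset unfolding ext_supp_def by metis
  ultimately obtain K where K: "K \<in> orbitals (fst F)" "Inf K = c"
    using orbital_with_Inf[OF standard_finite_orbitals[OF F] _ \<open>c < d\<close>] by blast
  then have "c \<in> transition_points (fst F)" unfolding transition_points_def by force
  then have "c \<notin> supt (fst G)"
    using osc oscillation_eq_0_iff[OF standard_finite_orbitals[OF G]] Union_components[of "supt (fst G)"]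
    unfolding orbitals_def by blast
  moreover have "{c<..<b} \<subseteq> closure (supt (fst G))"
    using ab \<open>c \<in> {a<..<b}\<close> interior_subset unfolding ext_supp_def by fastforce
  moreover have "c < b" using \<open>c \<in> {a<..<b}\<close> by simp
  ultimately obtain J where J: "J \<in> orbitals (fst G)" "Inf J = c"
    using orbital_with_Inf[OF standard_finite_orbitals[OF G]] by blast
  have "F \<noteq> G" using \<open>F \<sqsubset> G\<close> sqsub_irrefl[OF F] by blast
  with fast K J show False using fast_orbitals_Inf_neq by metis
qed

lemma std_pair_fast: "std_pair F G \<Longrightarrow> fast {F, G}"
  by (induction rule: std_pair.induct) simp_all

lemma oscillation_eq_0_iff_ll:
  assumes "standard F" "standard G" "std_pair F G" "slt F G"
  shows "oscillation F G = 0 \<longleftrightarrow> F \<lless> G"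
proof
  assume "oscillation F G = 0"
  then have "\<not> F \<sqsubset> G"
    using sqsub_imp_oscillation_neq_0[OF assms(1,2) std_pair_fast[OF assms(3)]] by blast
  then show "F \<lless> G" using assms(4) unfolding slt_def by blast
qed (rule ll_imp_oscillation_eq_0[OF assms(1,2)])

lemma class_S_subset:
  assumes "A \<in> class_S" "B \<subseteq> A" shows "B \<in> class_S"
proof -
  have "finite B" using assms finite_subset unfolding class_S_def by auto
  with assms show ?thesis unfolding class_S_def mem_Collect_eq by (intro conjI) blast+
qed

lemma class_S_standard: "A \<in> class_S \<Longrightarrow> F \<in> A \<Longrightarrow> standard F"
  unfolding class_S_def by blast

lemma class_S_std_pair: "A \<in> class_S \<Longrightarrow> F \<in> A \<Longrightarrow> G \<in> A \<Longrightarrow> slt F G \<Longrightarrow> std_pair F G"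
  unfolding class_S_def by blast

lemma decomposable_imp_ll_greatest:
  assumes "decomposable A" "M \<in> A" and greatest: "\<forall>F\<in>A. F \<noteq> M \<longrightarrow> slt F M"
  shows "\<exists>F\<in>A. F \<lless> M"
proof -
  obtain B C where "B \<noteq> {}" "C \<noteq> {}" "is_sum A B C"
    using assms(1) unfolding decomposable_def by blast
  then have A: "A \<in> class_S" "A = B \<union> C" and BC: "\<forall>b\<in>B. \<forall>c\<in>C. b \<lless> c"
    unfolding is_sum_def by blast+
  have "M \<notin> B"
  proof
    assume "M \<in> B"
    obtain c where "c \<in> C" using \<open>C \<noteq> {}\<close> by blast
    with \<open>M \<in> B\<close> BC have "M \<lless> c" by blast
    have "c \<in> A" using A(2) \<open>c \<in> C\<close> by blast
    then have "standard M" "standard c" using class_S_standard[OF A(1)] assms(2) by auto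
    show False
    proof (cases "c = M")
      case True
      then show False using \<open>M \<lless> c\<close> ll_irrefl[OF \<open>standard M\<close>] by simp
    next
      case False
      then have "slt c M" using greatest \<open>c \<in> A\<close> by blast
      then show False using ll_imp_not_slt[OF \<open>standard M\<close> \<open>standard c\<close> \<open>M \<lless> c\<close>] by contradiction
    qed
  qed
  then have "M \<in> C" using A assms(2) by blast
  obtain b where "b \<in> B" using \<open>B \<noteq> {}\<close> by blast
  then show ?thesis using BC \<open>M \<in> C\<close> A by blast
qed

lemma ll_greatest_imp_decomposable:
  assumes A: "A \<in> class_S" and "M \<in> A" and greatest: "\<forall>F\<in>A. F \<noteq> M \<longrightarrow> slt F M"
    and "F \<in> A" "F \<lless> M"
  shows "decomposable A"
proof -
  define B where "B = {G\<in>A. G \<lless> M}"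
  define C where "C = A - B"
  have "F \<in> B" using assms(4,5) unfolding B_def by blast
  have "M \<in> C"
    using \<open>M \<in> A\<close> ll_irrefl[OF class_S_standard[OF A \<open>M \<in> A\<close>]] unfolding C_def B_def by blast
  have "B \<subseteq> A" "C \<subseteq> A" unfolding B_def C_def by auto
  have "A = B \<union> C" unfolding C_def using \<open>B \<subseteq> A\<close> by blast
  have "b \<lless> c" if "b \<in> B" "c \<in> C" for b c
  proof -
    have "b \<lless> M" using that(1) unfolding B_def by simp
    moreover have "c = M \<or> c \<sqsubset> M" using that(2) greatest unfolding C_def B_def slt_def by blast
    ultimately show ?thesis using ll_sqsub_trans by blast
  qed
  with A \<open>A = B \<union> C\<close> class_S_subset[OF A \<open>B \<subseteq> A\<close>] class_S_subset[OF A \<open>C \<subseteq> A\<close>]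
  have "is_sum A B C" unfolding is_sum_def by blast
  with \<open>F \<in> B\<close> \<open>M \<in> C\<close> show ?thesis unfolding decomposable_def by blast
qed

lemma decomposable_iff_ll_greatest:
  assumes "A \<in> class_S" "M \<in> A" "\<forall>F\<in>A. F \<noteq> M \<longrightarrow> slt F M"
  shows "decomposable A \<longleftrightarrow> (\<exists>F\<in>A. F \<lless> M)"
  using assms decomposable_imp_ll_greatest ll_greatest_imp_decomposable by metis

lemma image_lessThan_not_last:
  fixes a :: "nat \<Rightarrow> 'a"
  assumes "F \<in> a ` {..<n}" "F \<noteq> a (n - 1)" obtains i where "i < n - 1" "F = a i"
proof -
  obtain j where "j < n" "F = a j" using assms(1) by blast
  moreover have "j \<noteq> n - 1" using assms(2) \<open>F = a j\<close> by blast
  ultimately have "j < n - 1" by arith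
  with \<open>F = a j\<close> that show ?thesis by blast
qed

lemma bex_image_lessThan_not_last:
  fixes a :: "nat \<Rightarrow> 'a"
  assumes "\<not> P (a (n - 1))"
  shows "(\<exists>F\<in>a ` {..<n}. P F) \<longleftrightarrow> (\<exists>i < n - 1. P (a i))"
proof
  assume "\<exists>F\<in>a ` {..<n}. P F"
  then obtain F where "F \<in> a ` {..<n}" "P F" by blast
  moreover have "F \<noteq> a (n - 1)" using assms \<open>P F\<close> by blast
  ultimately show "\<exists>i < n - 1. P (a i)" using image_lessThan_not_last by metis
qed auto

theorem lemma4p4:
  fixes A :: "mfun set" and a :: "nat \<Rightarrow> mfun" and n :: nat
  assumes "A \<in> class_S"
    and "n \<ge> 1"
    and "A = a ` {..<n}"
    and "\<And>i j. i < j \<Longrightarrow> j < n \<Longrightarrow> slt (a i) (a j)"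
  shows "decomposable A \<longleftrightarrow> (\<exists>i < n - 1. oscillation (a i) (a (n - 1)) = 0)"
proof -
  define M where "M = a (n - 1)"
  have "M \<in> A" using assms(2) unfolding assms(3) M_def by simp
  have greatest: "\<forall>F\<in>A. F \<noteq> M \<longrightarrow> slt F M"
  proof (intro ballI impI)
    fix F assume "F \<in> A" "F \<noteq> M"
    then obtain i where "i < n - 1" "F = a i"
      using image_lessThan_not_last[of F a n] unfolding assms(3) M_def by blast
    then show "slt F M" using assms(2,4) unfolding M_def by simp
  qed
  have "decomposable A \<longleftrightarrow> (\<exists>F\<in>A. F \<lless> M)"
    by (rule decomposable_iff_ll_greatest[OF assms(1) \<open>M \<in> A\<close> greatest])
  also have "\<dots> \<longleftrightarrow> (\<exists>i < n - 1. a i \<lless> M)"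
    unfolding assms(3) M_def
    by (rule bex_image_lessThan_not_last) (rule ll_irrefl[OF class_S_standard[OF assms(1) \<open>M \<in> A\<close>[unfolded M_def]]])
  also have "\<dots> \<longleftrightarrow> (\<exists>i < n - 1. oscillation (a i) M = 0)"
  proof (intro ex_cong1 conj_cong refl)
    fix i assume "i < n - 1"
    then have "a i \<in> A" "slt (a i) M" using assms(3,4) unfolding M_def by auto
    then show "a i \<lless> M \<longleftrightarrow> oscillation (a i) M = 0"
      using oscillation_eq_0_iff_ll class_S_standard class_S_std_pair assms(1) \<open>M \<in> A\<close> by metis
  qed
  finally show ?thesis unfolding M_def .
qed

end
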